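(* Let $Q$ be a $D$-dimensional convex polytope in $\mathbb{R}^D$ with $m$ vertices. Then $Q$ is locally point symmetric if and only if $Q$ has exactly $m/2$ (unordered) pairs of strictly antipodal vertices.
   Context: $Q$ is $D$-dimensional means its affine hull is $\mathbb{R}^D$. Two vertices $\mathbf{u},\mathbf{v}$ of a convex polytope $Q$ are strictly antipodal if there exist parallel supporting hyperplanes $H_1,H_2$ of $Q$ with $H_1\cap Q=\{\mathbf{u}\}$ and $H_2 \cap Q = \{\mathbf{v}\}$. The supporting cone of $Q$ at a vertex $\mathbf{v}$ is $C(\mathbf{v}) = \mathbf{v} + \bigcup_{\lambda \ge 0}\lambda(Q - \mathbf{v})$. A convex polytope $Q$ with $m$ vertices is locally point symmetric if its vertices can be partitioned into $m/2$ pairs of strictly antipodal vertices such that for each pair $\{\mathbf{u},\mathbf{v}\}$, $C(\mathbf{u}) - \mathbf{u} = \mathbf{v} - C(\mathbf{v})$. *)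

theory Defs
  imports "HOL-Analysis.Analysis"
begin

definition vertices :: "'a::euclidean_space set \<Rightarrow> 'a set" where
  "vertices Q = {v. v extreme_point_of Q}"

definition supporting_hyperplane :: "'a::euclidean_space set \<Rightarrow> 'a set \<Rightarrow> bool" where
  "supporting_hyperplane Q H \<longleftrightarrow>
     (\<exists>a b. a \<noteq> 0 \<and> H = {x. a \<bullet> x = b} \<and> H \<inter> Q \<noteq> {} \<and> Q \<subseteq> {x. a \<bullet> x \<le> b})"

definition parallel_hyperplanes :: "'a::euclidean_space set \<Rightarrow> 'a set \<Rightarrow> bool" where
  "parallel_hyperplanes H1 H2 \<longleftrightarrow>
     (\<exists>a1 b1 a2 b2 c. a1 \<noteq> 0 \<and> c \<noteq> 0 \<and> a2 = c *\<^sub>R a1 \<and>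
        H1 = {x. a1 \<bullet> x = b1} \<and> H2 = {x. a2 \<bullet> x = b2})"

definition strictly_antipodal :: "'a::euclidean_space set \<Rightarrow> 'a \<Rightarrow> 'a \<Rightarrow> bool" where
  "strictly_antipodal Q u v \<longleftrightarrow>
     u \<in> vertices Q \<and> v \<in> vertices Q \<and>
     (\<exists>H1 H2. supporting_hyperplane Q H1 \<and> supporting_hyperplane Q H2 \<and>
        parallel_hyperplanes H1 H2 \<and> H1 \<inter> Q = {u} \<and> H2 \<inter> Q = {v})"

definition supporting_cone :: "'a::euclidean_space set \<Rightarrow> 'a \<Rightarrow> 'a set" where
  "supporting_cone Q v = {v + l *\<^sub>R (x - v) | l x. l \<ge> 0 \<and> x \<in> Q}"

definition antipodal_pairs :: "'a::euclidean_space set \<Rightarrow> 'a set set" where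
  "antipodal_pairs Q = {{u, v} | u v. u \<noteq> v \<and> strictly_antipodal Q u v}"

definition locally_point_symmetric :: "'a::euclidean_space set \<Rightarrow> bool" where
  "locally_point_symmetric Q \<longleftrightarrow>
     (\<exists>P. (\<forall>p\<in>P. \<exists>u v. p = {u, v} \<and> u \<noteq> v \<and> strictly_antipodal Q u v \<and>
              (\<lambda>x. x - u) ` supporting_cone Q u = (\<lambda>x. v - x) ` supporting_cone Q v) \<and>
          (\<forall>p\<in>P. \<forall>q\<in>P. p \<noteq> q \<longrightarrow> p \<inter> q = {}) \<and>
          \<Union>P = vertices Q \<and> 2 * card P = card (vertices Q))"

end

theory Submission
  imports Defs
begin

text \<open>Say that a functional \<open>a\<close> exposes a vertex \<open>u\<close> if \<open>u\<close> is its unique maximiser on \<open>Q\<close>.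
  Two distinct vertices \<open>u\<close>, \<open>w\<close> are strictly antipodal iff some \<open>a\<close> exposes \<open>u\<close> while \<open>-a\<close>
  exposes \<open>w\<close>. If \<open>Q\<close> is not a point, every vertex \<open>u\<close> has such a partner: take \<open>a\<close> exposing
  \<open>u\<close> and a vertex \<open>w\<close> maximising \<open>-a\<close>, and tilt \<open>a\<close> slightly towards a functional exposing
  \<open>w\<close>. So the antipodal pairs cover the \<open>m\<close> vertices, and there are \<open>m/2\<close> of them iff they are
  pairwise disjoint, i.e. iff every vertex has exactly one partner.

  It remains to see that \<open>u\<close> has the unique partner \<open>v\<close> iff \<open>C(u) - u = v - C(v)\<close>. If the cones
  are opposite, \<open>-a\<close> exposes \<open>v\<close> whenever \<open>a\<close> exposes \<open>u\<close>. Conversely, if \<open>v\<close> is the unique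
  partner, then \<open>-a\<close> is maximised at \<open>v\<close> for every \<open>a\<close> exposing \<open>u\<close>, hence (by a limit) for
  every \<open>a\<close> maximised at \<open>u\<close>; since \<open>C(u) - u\<close> is a closed convex cone, separation turns this
  into \<open>v - C(v) \<subseteq> C(u) - u\<close>, and symmetry gives equality.\<close>

definition exposes :: "'a::euclidean_space set \<Rightarrow> 'a \<Rightarrow> 'a \<Rightarrow> bool" where
  "exposes Q a u \<longleftrightarrow> u \<in> Q \<and> (\<forall>x\<in>Q. x \<noteq> u \<longrightarrow> a \<bullet> x < a \<bullet> u)"

lemma exposes_unique: "exposes Q a u \<Longrightarrow> exposes Q a w \<Longrightarrow> u = w"
  unfolding exposes_def by (metis less_asym)

lemma exposes_scaleR: "exposes Q (t *\<^sub>R a) w \<Longrightarrow> t > 0 \<Longrightarrow> exposes Q a w"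
  unfolding exposes_def by (auto simp: mult_less_cancel_left_pos)

lemma exposes_nonzero: "exposes Q a u \<Longrightarrow> x \<in> Q \<Longrightarrow> x \<noteq> u \<Longrightarrow> a \<noteq> 0"
  unfolding exposes_def by fastforce

lemma exposesI:
  assumes "Q \<subseteq> {x. a \<bullet> x \<le> b}" "Q \<inter> {x. a \<bullet> x = b} = {u}"
  shows "exposes Q a u"
  unfolding exposes_def
proof (intro conjI ballI impI)
  show "u \<in> Q"
    using assms(2) by blast
  fix x assume "x \<in> Q" "x \<noteq> u"
  then have "a \<bullet> x \<noteq> b" "a \<bullet> x \<le> b" "a \<bullet> u = b"
    using assms by auto
  then show "a \<bullet> x < a \<bullet> u"
    by simp
qed

lemma exposes_imp_supporting_hyperplane:
  assumes "exposes Q a u" "a \<noteq> 0"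
  shows "supporting_hyperplane Q {x. a \<bullet> x = a \<bullet> u}" "{x. a \<bullet> x = a \<bullet> u} \<inter> Q = {u}"
proof -
  have "u \<in> {x. a \<bullet> x = a \<bullet> u} \<inter> Q" "Q \<subseteq> {x. a \<bullet> x \<le> a \<bullet> u}"
    using assms(1) unfolding exposes_def by (auto intro: less_imp_le)
  then show "supporting_hyperplane Q {x. a \<bullet> x = a \<bullet> u}"
    unfolding supporting_hyperplane_def using assms(2) by blast
  show "{x. a \<bullet> x = a \<bullet> u} \<inter> Q = {u}"
    using assms(1) unfolding exposes_def by fastforce
qed

lemma exposes_imp_vertex:
  assumes "convex Q" "exposes Q a u"
  shows "u \<in> vertices Q"
proof -
  have "Q \<inter> {x. a \<bullet> x = a \<bullet> u} face_of Q"
    using assms by (intro face_of_Int_supporting_hyperplane_le) (auto simp: exposes_def less_imp_le)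
  moreover have "Q \<inter> {x. a \<bullet> x = a \<bullet> u} = {u}"
    using assms(2) unfolding exposes_def by fastforce
  ultimately show ?thesis
    by (simp add: vertices_def face_of_singleton)
qed

lemma vertices_subset: "vertices Q \<subseteq> Q"
  unfolding vertices_def extreme_point_of_def by auto

lemma polytope_vertices:
  assumes "polytope Q"
  shows "finite (vertices Q)" "Q = convex hull (vertices Q)"
  using assms finite_polyhedron_extreme_points polytope_imp_polyhedron
    Krein_Milman_Minkowski polytope_imp_compact polytope_imp_convex
  unfolding vertices_def by blast+

lemma polytope_le_iff_vertices_le:
  assumes "polytope Q"
  shows "(\<forall>x\<in>Q. a \<bullet> x \<le> b) \<longleftrightarrow> (\<forall>x\<in>vertices Q. a \<bullet> x \<le> b)"
proof
  assume "\<forall>x\<in>vertices Q. a \<bullet> x \<le> b"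
  then have "convex hull (vertices Q) \<subseteq> {x. a \<bullet> x \<le> b}"
    by (intro hull_minimal) (auto simp: convex_halfspace_le)
  then show "\<forall>x\<in>Q. a \<bullet> x \<le> b"
    using polytope_vertices(2)[OF assms] by blast
qed (use vertices_subset in blast)

lemma polytope_exposes_iff:
  assumes "polytope Q" "u \<in> vertices Q"
  shows "exposes Q a u \<longleftrightarrow> (\<forall>x\<in>vertices Q. x \<noteq> u \<longrightarrow> a \<bullet> x < a \<bullet> u)"
proof
  assume strict: "\<forall>x\<in>vertices Q. x \<noteq> u \<longrightarrow> a \<bullet> x < a \<bullet> u"
  let ?F = "Q \<inter> {x. a \<bullet> x = a \<bullet> u}"
  have le: "\<forall>x\<in>Q. a \<bullet> x \<le> a \<bullet> u"
    using strict polytope_le_iff_vertices_le[OF assms(1)] by (metis order.order_iff_strict)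
  \<comment> \<open>the face cut out by \<open>a\<close> is the hull of the vertices it contains, and \<open>u\<close> is the only one\<close>
  have "?F face_of convex hull (vertices Q)"
    using face_of_Int_supporting_hyperplane_le polytope_vertices(2)[OF assms(1)]
      polytope_imp_convex[OF assms(1)] le by metis
  then obtain S where S: "S \<subseteq> vertices Q" "?F = convex hull S"
    using face_of_convex_hull_subset finite_imp_compact polytope_vertices(1)[OF assms(1)] by metis
  have "S \<subseteq> {u}"
  proof
    fix x assume "x \<in> S"
    then have "x \<in> vertices Q" "a \<bullet> x = a \<bullet> u"
      using S hull_subset[of S convex] by auto
    then show "x \<in> {u}"
      using strict by fastforce
  qed
  then have "?F \<subseteq> {u}"
    using S(2) hull_mono[of S "{u}" convex] by simp
  then show "exposes Q a u"
    using le assms(2) vertices_subset by (intro exposesI[of Q a "a \<bullet> u"]) auto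
qed (use vertices_subset in \<open>auto simp: exposes_def\<close>)

lemma vertex_imp_exposes:
  assumes "polytope Q" "u \<in> vertices Q"
  obtains a where "exposes Q a u"
proof -
  have "{u} exposed_face_of Q"
    using assms exposed_face_of_polyhedron polytope_imp_polyhedron face_of_singleton
    unfolding vertices_def by blast
  then obtain a b where "Q \<subseteq> {x. a \<bullet> x \<le> b}" "Q \<inter> {x. a \<bullet> x = b} = {u}"
    unfolding exposed_face_of_def by metis
  then show thesis
    using exposesI that by blast
qed

lemma hyperplane_eq_imp_normal_parallel:
  fixes a c :: "'a::euclidean_space"
  assumes "c \<noteq> 0" "{x. a \<bullet> x = b} = {x. c \<bullet> x = d}" "p \<in> {x. a \<bullet> x = b}"
  obtains k where "a = k *\<^sub>R c"
proof -
  \<comment> \<open>the component of \<open>a\<close> orthogonal to \<open>c\<close> is orthogonal to the hyperplane, hence to itself\<close>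
  define y where "y = a - ((a \<bullet> c) / (c \<bullet> c)) *\<^sub>R c"
  have "c \<bullet> y = 0"
    using assms(1) by (simp add: y_def inner_diff_right inner_commute)
  then have "p + y \<in> {x. c \<bullet> x = d}"
    using assms(2,3) by (auto simp: inner_add_right)
  then have "a \<bullet> (p + y) = b"
    using assms(2) by blast
  then have "a \<bullet> y = 0"
    using assms(3) by (simp add: inner_add_right)
  then have "y \<bullet> y = 0"
    using \<open>c \<bullet> y = 0\<close> by (simp add: y_def inner_diff_left inner_commute)
  then have "y = 0"
    by simp
  then show thesis
    using that unfolding y_def by (metis eq_iff_diff_eq_0)
qed

lemma parallel_hyperplanes_normals:
  assumes "parallel_hyperplanes H1 H2" "H1 = {x. a \<bullet> x = b}" "H2 = {x. a' \<bullet> x = b'}"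
    "a \<noteq> 0" "p \<in> H1" "q \<in> H2"
  obtains t where "a' = t *\<^sub>R a"
proof -
  obtain n b1 b2 c where n: "n \<noteq> 0" "c \<noteq> 0" "H1 = {x. n \<bullet> x = b1}" "H2 = {x. (c *\<^sub>R n) \<bullet> x = b2}"
    using assms(1) unfolding parallel_hyperplanes_def by blast
  obtain k where k: "a = k *\<^sub>R n"
    using hyperplane_eq_imp_normal_parallel[of n a b b1 p] n assms(2,5) by blast
  obtain k' where k': "a' = k' *\<^sub>R (c *\<^sub>R n)"
    using hyperplane_eq_imp_normal_parallel[of "c *\<^sub>R n" a' b' b2 q] n assms(3,6) by auto
  have "k \<noteq> 0"
    using k assms(4) by auto
  then have "a' = (k' * c / k) *\<^sub>R a"
    using k k' by simp
  then show thesis ..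
qed

lemma strictly_antipodal_imp_exposes:
  assumes "strictly_antipodal Q u w" "u \<noteq> w"
  obtains a where "exposes Q a u" "exposes Q (-a) w"
proof -
  obtain H1 H2 where H: "supporting_hyperplane Q H1" "supporting_hyperplane Q H2"
     "parallel_hyperplanes H1 H2" "H1 \<inter> Q = {u}" "H2 \<inter> Q = {w}"
    using assms(1) unfolding strictly_antipodal_def by blast
  obtain a b where a: "a \<noteq> 0" "H1 = {x. a \<bullet> x = b}" "Q \<subseteq> {x. a \<bullet> x \<le> b}"
    using H(1) unfolding supporting_hyperplane_def by blast
  obtain a' b' where a': "H2 = {x. a' \<bullet> x = b'}" "Q \<subseteq> {x. a' \<bullet> x \<le> b'}"
    using H(2) unfolding supporting_hyperplane_def by blast
  have exposes_u: "exposes Q a u" and exposes_w: "exposes Q a' w"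
    using a a' H(4,5) by (auto intro!: exposesI simp: Int_commute)
  obtain t where t: "a' = t *\<^sub>R a"
    using parallel_hyperplanes_normals[OF H(3) a(2) a'(1) a(1)] H(4,5) by blast
  have "\<not> t > 0"
    using t exposes_u exposes_w assms(2) exposes_scaleR exposes_unique by blast
  moreover have "u \<in> Q"
    using exposes_u unfolding exposes_def by blast
  then have "t \<noteq> 0"
    using t exposes_nonzero[OF exposes_w _ assms(2)] by auto
  ultimately have "exposes Q (-a) w"
    using t exposes_w exposes_scaleR[of Q "-t" "-a" w] by simp
  then show thesis
    using that exposes_u by blast
qed

lemma exposes_opposite_imp_strictly_antipodal:
  assumes "convex Q" "exposes Q a u" "exposes Q (-a) w" "u \<noteq> w"
  shows "strictly_antipodal Q u w"
proof -
  have "w \<in> Q"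
    using assms(3) unfolding exposes_def by blast
  then have "a \<noteq> 0"
    using assms(2,4) exposes_nonzero by metis
  then have "supporting_hyperplane Q {x. a \<bullet> x = a \<bullet> u}" "{x. a \<bullet> x = a \<bullet> u} \<inter> Q = {u}"
    "supporting_hyperplane Q {x. (-a) \<bullet> x = (-a) \<bullet> w}" "{x. (-a) \<bullet> x = (-a) \<bullet> w} \<inter> Q = {w}"
    using exposes_imp_supporting_hyperplane assms(2,3) by (metis neg_equal_0_iff_equal)+
  moreover have "parallel_hyperplanes {x. a \<bullet> x = a \<bullet> u} {x. (-a) \<bullet> x = (-a) \<bullet> w}"
    unfolding parallel_hyperplanes_def using \<open>a \<noteq> 0\<close>
    by (intro exI[of _ a] exI[of _ "a \<bullet> u"] exI[of _ "-a"] exI[of _ "(-a) \<bullet> w"] exI[of _ "-1"]) auto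
  moreover have "u \<in> vertices Q" "w \<in> vertices Q"
    using assms(1-3) exposes_imp_vertex by blast+
  ultimately show ?thesis
    unfolding strictly_antipodal_def by blast
qed

lemma strictly_antipodal_sym:
  assumes "convex Q" "strictly_antipodal Q u w" "u \<noteq> w"
  shows "strictly_antipodal Q w u"
proof -
  obtain a where "exposes Q a u" "exposes Q (-a) w"
    using strictly_antipodal_imp_exposes assms(2,3) by blast
  then show ?thesis
    using exposes_opposite_imp_strictly_antipodal[of Q "-a" w u] assms(1,3) by simp
qed

lemma strictly_antipodal_imp_vertices:
  "strictly_antipodal Q u w \<Longrightarrow> u \<in> vertices Q \<and> w \<in> vertices Q"
  unfolding strictly_antipodal_def by blast

lemma polytope_max_vertex:
  assumes "polytope Q" "Q \<noteq> {}"
  obtains w where "w \<in> vertices Q" "\<forall>x\<in>Q. c \<bullet> x \<le> c \<bullet> w"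
proof -
  let ?M = "Max ((\<bullet>) c ` vertices Q)"
  have fin: "finite (vertices Q)"
    using polytope_vertices(1)[OF assms(1)] .
  have "vertices Q \<noteq> {}"
    using assms polytope_vertices(2)[OF assms(1)] by auto
  then have "?M \<in> (\<bullet>) c ` vertices Q"
    using fin by (intro Max_in) auto
  then obtain w where w: "w \<in> vertices Q" "c \<bullet> w = ?M"
    by auto
  then have "\<forall>x\<in>vertices Q. c \<bullet> x \<le> c \<bullet> w"
    using fin by simp
  then have "\<forall>x\<in>Q. c \<bullet> x \<le> c \<bullet> w"
    using polytope_le_iff_vertices_le[OF assms(1)] by blast
  then show thesis
    using that w(1) by blast
qed

lemma exists_small_perturbation_pos:
  fixes f g :: "'b \<Rightarrow> real"
  assumes "finite S" "\<forall>x\<in>S. 0 < f x"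
  obtains e where "0 < e" "\<forall>x\<in>S. 0 < f x + e * g x"
proof -
  have "\<forall>\<^sub>F e in at_right 0. (0::real) < e"
    by (simp add: eventually_at_right_less)
  moreover have "\<forall>\<^sub>F e in at_right 0. \<forall>x\<in>S. 0 < f x + e * g x"
  proof (rule eventually_ball_finite[OF assms(1)], intro ballI)
    fix x assume "x \<in> S"
    moreover have "((\<lambda>e. f x + e * g x) \<longlongrightarrow> f x + 0 * g x) (at_right 0)"
      by (intro tendsto_intros)
    ultimately show "\<forall>\<^sub>F e in at_right 0. 0 < f x + e * g x"
      using assms(2) order_tendstoD(1) by fastforce
  qed
  ultimately have "\<forall>\<^sub>F e in at_right 0. 0 < e \<and> (\<forall>x\<in>S. 0 < f x + e * g x)"
    by (rule eventually_conj)
  then obtain e where "0 < e \<and> (\<forall>x\<in>S. 0 < f x + e * g x)"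
    using eventually_happens'[OF trivial_limit_at_right_real] by blast
  then show thesis
    using that by blast
qed

lemma exposes_opposite_perturb:
  assumes "polytope Q" "exposes Q a u" "w \<in> vertices Q" "\<forall>x\<in>Q. (-a) \<bullet> x \<le> (-a) \<bullet> w"
  obtains a' where "exposes Q a' u" "exposes Q (-a') w"
proof -
  let ?V = "vertices Q"
  have u: "u \<in> ?V"
    using assms(1,2) exposes_imp_vertex polytope_imp_convex by blast
  obtain b where b: "exposes Q b w"
    using vertex_imp_exposes assms(1,3) by blast
  \<comment> \<open>tilting \<open>a\<close> slightly towards \<open>-b\<close> keeps \<open>u\<close> exposed and breaks the ties of \<open>-a\<close> at \<open>w\<close>\<close>
  obtain e where e: "0 < e" "\<forall>x\<in>?V - {u}. 0 < (a \<bullet> u - a \<bullet> x) + e * (b \<bullet> x - b \<bullet> u)"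
  proof (rule exists_small_perturbation_pos)
    show "finite (?V - {u})"
      using polytope_vertices(1)[OF assms(1)] by simp
    show "\<forall>x\<in>?V - {u}. 0 < a \<bullet> u - a \<bullet> x"
      using assms(2) vertices_subset unfolding exposes_def by auto
  qed
  have "exposes Q (a - e *\<^sub>R b) u"
    using e(2) by (subst polytope_exposes_iff[OF assms(1) u]) (auto simp: inner_diff_left algebra_simps)
  moreover have "exposes Q (- (a - e *\<^sub>R b)) w"
  proof (subst polytope_exposes_iff[OF assms(1,3)], intro ballI impI)
    fix x assume x: "x \<in> ?V" "x \<noteq> w"
    then have "b \<bullet> x < b \<bullet> w"
      using b vertices_subset unfolding exposes_def by blast
    then have "0 < e * (b \<bullet> w - b \<bullet> x)"
      using e(1) by simp
    moreover have "(-a) \<bullet> x \<le> (-a) \<bullet> w"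
      using assms(4) x vertices_subset by blast
    ultimately show "(- (a - e *\<^sub>R b)) \<bullet> x < (- (a - e *\<^sub>R b)) \<bullet> w"
      by (simp add: inner_diff_left algebra_simps)
  qed
  ultimately show thesis
    using that by blast
qed

lemma strictly_antipodal_of_opposite_max:
  assumes "polytope Q" "exposes Q a u" "w \<in> vertices Q" "\<forall>x\<in>Q. (-a) \<bullet> x \<le> (-a) \<bullet> w" "Q \<noteq> {u}"
  shows "u \<noteq> w" "strictly_antipodal Q u w"
proof -
  obtain y where "y \<in> Q" "y \<noteq> u"
    using assms(2,5) unfolding exposes_def by blast
  then have "a \<bullet> y < a \<bullet> u" "(-a) \<bullet> y \<le> (-a) \<bullet> w"
    using assms(2,4) unfolding exposes_def by auto
  then show "u \<noteq> w"
    by auto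
  then show "strictly_antipodal Q u w"
    using exposes_opposite_perturb[OF assms(1-4)] exposes_opposite_imp_strictly_antipodal
      polytope_imp_convex[OF assms(1)] by metis
qed

lemma strictly_antipodal_partner_exists:
  assumes "polytope Q" "u \<in> vertices Q" "Q \<noteq> {u}"
  obtains w where "u \<noteq> w" "strictly_antipodal Q u w"
proof -
  obtain a where "exposes Q a u"
    using vertex_imp_exposes assms(1,2) by blast
  moreover obtain w where "w \<in> vertices Q" "\<forall>x\<in>Q. (-a) \<bullet> x \<le> (-a) \<bullet> w"
    using polytope_max_vertex[OF assms(1)] assms(2) vertices_subset by blast
  ultimately show thesis
    using that strictly_antipodal_of_opposite_max[OF assms(1)] assms(3) by blast
qed

lemma unique_partner_maximizes_opposite:
  assumes "polytope Q" "exposes Q a u" "strictly_antipodal Q u v" "u \<noteq> v"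
    and unique: "\<And>w. strictly_antipodal Q u w \<Longrightarrow> u \<noteq> w \<Longrightarrow> w = v"
  shows "\<forall>x\<in>Q. (-a) \<bullet> x \<le> (-a) \<bullet> v"
proof -
  have "v \<in> Q"
    using assms(3) strictly_antipodal_imp_vertices vertices_subset by blast
  then have "Q \<noteq> {u}"
    using assms(4) by blast
  obtain w where w: "w \<in> vertices Q" "\<forall>x\<in>Q. (-a) \<bullet> x \<le> (-a) \<bullet> w"
    using polytope_max_vertex[OF assms(1)] \<open>v \<in> Q\<close> by blast
  then have "w = v"
    using unique strictly_antipodal_of_opposite_max[OF assms(1,2) w \<open>Q \<noteq> {u}\<close>] by blast
  then show ?thesis
    using w by simp
qed

definition tangent_cone :: "'a::euclidean_space set \<Rightarrow> 'a \<Rightarrow> 'a set" where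
  "tangent_cone Q u = conic hull ((\<lambda>x. x - u) ` Q)"

lemma tangent_cone_explicit: "tangent_cone Q u = {l *\<^sub>R (x - u) | l x. 0 \<le> l \<and> x \<in> Q}"
  unfolding tangent_cone_def conic_hull_explicit by blast

lemma diff_in_tangent_cone: "x \<in> Q \<Longrightarrow> x - u \<in> tangent_cone Q u"
  unfolding tangent_cone_explicit by (auto intro!: exI[of _ 1])

lemma supporting_cone_translate: "(\<lambda>x. x - u) ` supporting_cone Q u = tangent_cone Q u"
proof -
  have "supporting_cone Q u = (+) u ` tangent_cone Q u"
    unfolding supporting_cone_def tangent_cone_explicit by blast
  then show ?thesis
    by (simp add: image_image)
qed

lemma supporting_cones_opposite_iff:
  "(\<lambda>x. x - u) ` supporting_cone Q u = (\<lambda>x. v - x) ` supporting_cone Q v \<longleftrightarrow>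
   tangent_cone Q u = uminus ` tangent_cone Q v"
proof -
  have "(\<lambda>x. v - x) ` supporting_cone Q v = uminus ` tangent_cone Q v"
    unfolding supporting_cone_translate[symmetric] image_image by simp
  then show ?thesis
    by (simp add: supporting_cone_translate)
qed

lemma polyhedron_tangent_cone: "polytope Q \<Longrightarrow> polyhedron (tangent_cone Q u)"
  unfolding tangent_cone_def
  by (metis polyhedron_conic_hull_polytope polytope_translation_eq diff_conv_add_uminus add.commute image_cong)

lemma maximizes_iff_tangent_cone:
  "(\<forall>x\<in>Q. c \<bullet> x \<le> c \<bullet> u) \<longleftrightarrow> (\<forall>z\<in>tangent_cone Q u. c \<bullet> z \<le> 0)"
proof
  assume "\<forall>x\<in>Q. c \<bullet> x \<le> c \<bullet> u"
  then show "\<forall>z\<in>tangent_cone Q u. c \<bullet> z \<le> 0"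
    unfolding tangent_cone_explicit by (auto simp: inner_diff_right mult_nonneg_nonpos)
next
  assume "\<forall>z\<in>tangent_cone Q u. c \<bullet> z \<le> 0"
  with diff_in_tangent_cone
  show "\<forall>x\<in>Q. c \<bullet> x \<le> c \<bullet> u"
    by (fastforce simp: inner_diff_right)
qed

lemma exposes_iff_tangent_cone:
  assumes "u \<in> Q"
  shows "exposes Q a u \<longleftrightarrow> (\<forall>z\<in>tangent_cone Q u. z \<noteq> 0 \<longrightarrow> a \<bullet> z < 0)"
proof
  assume "exposes Q a u"
  then show "\<forall>z\<in>tangent_cone Q u. z \<noteq> 0 \<longrightarrow> a \<bullet> z < 0"
    unfolding tangent_cone_explicit exposes_def by (auto simp: inner_diff_right mult_pos_neg)
next
  assume "\<forall>z\<in>tangent_cone Q u. z \<noteq> 0 \<longrightarrow> a \<bullet> z < 0"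
  with diff_in_tangent_cone
  show "exposes Q a u"
    using assms unfolding exposes_def by (fastforce simp: inner_diff_right)
qed

lemma separating_hyperplane_closed_cone:
  fixes K :: "'a::euclidean_space set"
  assumes "closed K" "convex K" "conic K" "0 \<in> K" "z \<notin> K"
  obtains c where "0 < c \<bullet> z" "\<forall>y\<in>K. c \<bullet> y \<le> 0"
proof -
  obtain a b where ab: "a \<bullet> z < b" "\<forall>y\<in>K. b < a \<bullet> y"
    using separating_hyperplane_closed_point[OF assms(2,1,5)] by blast
  have "b < 0"
    using ab(2) assms(4) by fastforce
  have "0 \<le> a \<bullet> y" if "y \<in> K" for y
  proof (rule ccontr)
    assume "\<not> 0 \<le> a \<bullet> y"
    then have "(b / (a \<bullet> y)) *\<^sub>R y \<in> K"
      using \<open>b < 0\<close> that assms(3) by (intro conicD) (auto simp: divide_nonpos_neg)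
    moreover have "a \<bullet> ((b / (a \<bullet> y)) *\<^sub>R y) = b"
      using \<open>\<not> 0 \<le> a \<bullet> y\<close> by simp
    ultimately show False
      using ab(2) by fastforce
  qed
  then show thesis
    using that[of "-a"] ab(1) \<open>b < 0\<close> by auto
qed

lemma tangent_cone_reflect_subset:
  assumes "polytope Q" "u \<in> Q"
    and "\<And>c. \<forall>x\<in>Q. c \<bullet> x \<le> c \<bullet> u \<Longrightarrow> \<forall>x\<in>Q. (-c) \<bullet> x \<le> (-c) \<bullet> v"
  shows "uminus ` tangent_cone Q v \<subseteq> tangent_cone Q u"
proof
  fix y assume "y \<in> uminus ` tangent_cone Q v"
  then obtain z where z: "z \<in> tangent_cone Q v" "y = -z"
    by blast
  show "y \<in> tangent_cone Q u"
  proof (rule ccontr)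
    assume "y \<notin> tangent_cone Q u"
    moreover have "0 \<in> tangent_cone Q u"
      using assms(2) unfolding tangent_cone_explicit by (auto intro!: exI[of _ 0] exI[of _ u])
    moreover have "closed (tangent_cone Q u)" "convex (tangent_cone Q u)"
      using polyhedron_tangent_cone[OF assms(1)] polyhedron_imp_closed polyhedron_imp_convex by blast+
    moreover have "conic (tangent_cone Q u)"
      unfolding tangent_cone_def by (rule conic_conic_hull)
    ultimately obtain c where c: "0 < c \<bullet> y" "\<forall>y\<in>tangent_cone Q u. c \<bullet> y \<le> 0"
      using separating_hyperplane_closed_cone by blast
    then have "\<forall>x\<in>Q. c \<bullet> x \<le> c \<bullet> u"
      using maximizes_iff_tangent_cone[of Q c u] by blast
    then have "\<forall>x\<in>Q. (-c) \<bullet> x \<le> (-c) \<bullet> v"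
      by (rule assms(3))
    then have "(-c) \<bullet> z \<le> 0"
      using z(1) maximizes_iff_tangent_cone[of Q "-c" v] by blast
    then show False
      using c(1) z(2) by simp
  qed
qed

lemma maximizes_opposite_of_exposing:
  assumes "exposes Q a0 u" "\<forall>x\<in>Q. c \<bullet> x \<le> c \<bullet> u"
    and "\<And>a. exposes Q a u \<Longrightarrow> \<forall>x\<in>Q. (-a) \<bullet> x \<le> (-a) \<bullet> v"
  shows "\<forall>x\<in>Q. (-c) \<bullet> x \<le> (-c) \<bullet> v"
proof
  fix x assume "x \<in> Q"
  have "c \<bullet> v - c \<bullet> x \<le> t * (a0 \<bullet> x - a0 \<bullet> v)" if "0 < t" for t
  proof -
    have "exposes Q (c + t *\<^sub>R a0) u"
      using assms(1,2) that unfolding exposes_def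
      by (fastforce simp: inner_add_left intro: add_le_less_mono)
    then show ?thesis
      using assms(3) \<open>x \<in> Q\<close> by (fastforce simp: inner_add_left algebra_simps)
  qed
  moreover have "((\<lambda>t. t * (a0 \<bullet> x - a0 \<bullet> v)) \<longlongrightarrow> 0) (at_right 0)"
    by (auto intro!: tendsto_eq_intros)
  ultimately have "c \<bullet> v - c \<bullet> x \<le> 0"
    by (intro tendsto_lowerbound[where F = "at_right 0"])
      (auto simp: eventually_at_right_less eventually_mono[OF eventually_at_right_less])
  then show "(-c) \<bullet> x \<le> (-c) \<bullet> v"
    by simp
qed

lemma unique_partner_tangent_cone_subset:
  assumes "polytope Q" "strictly_antipodal Q u v" "u \<noteq> v"
    and "\<And>w. strictly_antipodal Q u w \<Longrightarrow> u \<noteq> w \<Longrightarrow> w = v"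
  shows "uminus ` tangent_cone Q v \<subseteq> tangent_cone Q u"
proof (rule tangent_cone_reflect_subset[OF assms(1)])
  have u: "u \<in> vertices Q"
    using assms(2) strictly_antipodal_imp_vertices by blast
  then show "u \<in> Q"
    using vertices_subset by blast
  obtain a0 where "exposes Q a0 u"
    using vertex_imp_exposes[OF assms(1) u] by blast
  then show "\<forall>x\<in>Q. (-c) \<bullet> x \<le> (-c) \<bullet> v" if "\<forall>x\<in>Q. c \<bullet> x \<le> c \<bullet> u" for c
    using maximizes_opposite_of_exposing that unique_partner_maximizes_opposite[OF assms(1) _ assms(2-4)]
    by blast
qed

lemma unique_partners_imp_tangent_cones_opposite:
  assumes "polytope Q" "strictly_antipodal Q u v" "u \<noteq> v"
    and "\<And>w. strictly_antipodal Q u w \<Longrightarrow> u \<noteq> w \<Longrightarrow> w = v"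
    and "\<And>w. strictly_antipodal Q v w \<Longrightarrow> v \<noteq> w \<Longrightarrow> w = u"
  shows "tangent_cone Q u = uminus ` tangent_cone Q v"
proof -
  have "strictly_antipodal Q v u"
    using strictly_antipodal_sym polytope_imp_convex assms(1-3) by blast
  then have reflect_u: "uminus ` tangent_cone Q u \<subseteq> tangent_cone Q v"
    using unique_partner_tangent_cone_subset[OF assms(1)] assms(3,5) by blast
  have "tangent_cone Q u \<subseteq> uminus ` tangent_cone Q v"
  proof
    fix z assume "z \<in> tangent_cone Q u"
    then have "-z \<in> tangent_cone Q v"
      using reflect_u by blast
    then show "z \<in> uminus ` tangent_cone Q v"
      by (rule rev_image_eqI) simp
  qed
  then show ?thesis
    using unique_partner_tangent_cone_subset[OF assms(1-4)] by blast
qed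

lemma tangent_cones_opposite_imp_unique_partner:
  assumes "convex Q" "tangent_cone Q u = uminus ` tangent_cone Q v" "u \<in> Q" "v \<in> Q"
    and "strictly_antipodal Q u w" "u \<noteq> w"
  shows "w = v"
proof -
  obtain a where a: "exposes Q a u" "exposes Q (-a) w"
    using strictly_antipodal_imp_exposes assms(5,6) by blast
  \<comment> \<open>\<open>a\<close> is negative on the tangent cone at \<open>u\<close>, so \<open>-a\<close> is negative on its reflection, the tangent cone at \<open>v\<close>\<close>
  have "exposes Q (-a) v"
    using a(1) assms(2) exposes_iff_tangent_cone[OF assms(3)] exposes_iff_tangent_cone[OF assms(4)]
    by (auto simp: image_iff)
  then show ?thesis
    using a(2) exposes_unique by blast
qed

lemma card_two_cover_imp_disjoint:
  assumes "finite V" "\<Union>F = V" "\<forall>p\<in>F. card p = 2" "2 * card F = card V"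
  shows "disjoint F"
proof (rule pairwiseI, rule ccontr)
  fix p q assume pq: "p \<in> F" "q \<in> F" "p \<noteq> q" "\<not> disjnt p q"
  have fin: "finite F"
    using assms(1,2) by (metis Sup_upper finite_UnionD)
  then have "card F \<ge> 1"
    using pq(1) by (metis One_nat_def Suc_leI card_gt_0_iff empty_iff)
  obtain a b where q: "q = {a, b}"
    using assms(3) pq(2) card_2_iff by metis
  obtain x where "x \<in> p" "x \<in> q"
    using pq(4) unfolding disjnt_def by blast
  \<comment> \<open>\<open>q\<close> shares a point with \<open>p\<close>, so it contributes at most one further point to \<open>V\<close>\<close>
  then obtain y where "q - p \<subseteq> {y}"
    using q by blast
  then have "V \<subseteq> \<Union>(F - {q}) \<union> {y}"
    using assms(2) pq(1,3) by blast
  moreover have "finite (\<Union>(F - {q}) \<union> {y})"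
    using assms(1,2) finite_subset[of "\<Union>(F - {q})" V] by blast
  ultimately have "card V \<le> card (\<Union>(F - {q}) \<union> {y})"
    by (rule card_mono[rotated])
  also have "\<dots> \<le> card (\<Union>(F - {q})) + 1"
    using card_Un_le[of "\<Union>(F - {q})" "{y}"] by simp
  also have "\<dots> \<le> sum card (F - {q}) + 1"
    using card_Union_le_sum_card by simp
  also have "\<dots> = 2 * (card F - 1) + 1"
    using assms(3) fin pq(2) by simp
  finally show False
    using assms(4) \<open>card F \<ge> 1\<close> by linarith
qed

lemma strictly_antipodal_in_opposite_pair:
  assumes "convex Q" "strictly_antipodal Q u' v'" "tangent_cone Q u' = uminus ` tangent_cone Q v'"
    and "strictly_antipodal Q u w" "u \<noteq> w" "u \<in> {u', v'}"
  shows "{u, w} = {u', v'}"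
proof -
  have "u' \<in> Q" "v' \<in> Q"
    using assms(2) strictly_antipodal_imp_vertices vertices_subset by blast+
  moreover have "tangent_cone Q v' = uminus ` tangent_cone Q u'"
    using assms(3) by (simp add: image_image)
  ultimately consider "u = u'" "w = v'" | "u = v'" "w = u'"
    using tangent_cones_opposite_imp_unique_partner[OF assms(1)] assms(3-6) by blast
  then show ?thesis
    by cases auto
qed

lemma locally_point_symmetric_imp_card:
  assumes "polytope Q" "locally_point_symmetric Q"
  shows "2 * card (antipodal_pairs Q) = card (vertices Q)"
proof -
  obtain P where P: "\<forall>p\<in>P. \<exists>u v. p = {u, v} \<and> u \<noteq> v \<and> strictly_antipodal Q u v \<and>
        (\<lambda>x. x - u) ` supporting_cone Q u = (\<lambda>x. v - x) ` supporting_cone Q v"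
      "\<Union>P = vertices Q" "2 * card P = card (vertices Q)"
    using assms(2) unfolding locally_point_symmetric_def by (elim exE conjE) (rule that; assumption)
  have blocks: "\<forall>p\<in>P. \<exists>u v. p = {u, v} \<and> u \<noteq> v \<and> strictly_antipodal Q u v \<and>
      tangent_cone Q u = uminus ` tangent_cone Q v"
    using P(1) by (simp only: supporting_cones_opposite_iff)
  have "antipodal_pairs Q \<subseteq> P"
  proof
    fix p assume "p \<in> antipodal_pairs Q"
    then obtain u w where uw: "p = {u, w}" "u \<noteq> w" "strictly_antipodal Q u w"
      unfolding antipodal_pairs_def by blast
    then obtain q where "q \<in> P" "u \<in> q"
      using P(2) strictly_antipodal_imp_vertices by blast
    obtain u' v' where q: "q = {u', v'}" "strictly_antipodal Q u' v'"
        "tangent_cone Q u' = uminus ` tangent_cone Q v'"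
      using bspec[OF blocks \<open>q \<in> P\<close>] by blast
    have "p = q"
      using strictly_antipodal_in_opposite_pair[OF polytope_imp_convex[OF assms(1)] q(2,3) uw(3,2)]
        \<open>u \<in> q\<close> q(1) uw(1) by simp
    then show "p \<in> P"
      using \<open>q \<in> P\<close> by simp
  qed
  moreover have "P \<subseteq> antipodal_pairs Q"
    using blocks unfolding antipodal_pairs_def by blast
  ultimately show ?thesis
    using P(3) by simp
qed

lemma antipodal_pairs_cover:
  assumes "polytope Q" "card (vertices Q) \<noteq> 1"
  shows "\<Union>(antipodal_pairs Q) = vertices Q"
proof
  show "\<Union>(antipodal_pairs Q) \<subseteq> vertices Q"
    unfolding antipodal_pairs_def using strictly_antipodal_imp_vertices by blast
  show "vertices Q \<subseteq> \<Union>(antipodal_pairs Q)"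
  proof
    fix u assume u: "u \<in> vertices Q"
    have "Q \<noteq> {u}"
    proof
      assume "Q = {u}"
      then have "vertices Q = {u}"
        using u vertices_subset by blast
      then show False
        using assms(2) by simp
    qed
    then obtain w where "u \<noteq> w" "strictly_antipodal Q u w"
      using strictly_antipodal_partner_exists[OF assms(1) u] by blast
    then show "u \<in> \<Union>(antipodal_pairs Q)"
      unfolding antipodal_pairs_def by blast
  qed
qed

lemma disjoint_antipodal_pairs_imp_unique_partner:
  assumes "disjoint (antipodal_pairs Q)"
    and "strictly_antipodal Q u v" "u \<noteq> v" "strictly_antipodal Q u w" "u \<noteq> w"
  shows "w = v"
proof (rule ccontr)
  assume "w \<noteq> v"
  then have "{u, v} \<noteq> {u, w}"
    using assms(3,5) by (auto simp: doubleton_eq_iff)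
  moreover have "{u, v} \<in> antipodal_pairs Q" "{u, w} \<in> antipodal_pairs Q"
    using assms(2-5) unfolding antipodal_pairs_def by blast+
  ultimately have "disjnt {u, v} {u, w}"
    using pairwiseD[OF assms(1)] by blast
  then show False
    by (simp add: disjnt_def)
qed

lemma card_imp_locally_point_symmetric:
  assumes "polytope Q" "2 * card (antipodal_pairs Q) = card (vertices Q)"
  shows "locally_point_symmetric Q"
proof -
  let ?A = "antipodal_pairs Q"
  have "card (vertices Q) \<noteq> 1"
    using assms(2) by presburger
  then have cover: "\<Union>?A = vertices Q"
    using antipodal_pairs_cover[OF assms(1)] by blast
  have "\<forall>p\<in>?A. card p = 2"
    unfolding antipodal_pairs_def by auto
  then have disjoint: "disjoint ?A"
    using card_two_cover_imp_disjoint[OF polytope_vertices(1)[OF assms(1)] cover _ assms(2)] by blast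
  note unique = disjoint_antipodal_pairs_imp_unique_partner[OF disjoint]
  have blocks: "\<forall>p\<in>?A. \<exists>u v. p = {u, v} \<and> u \<noteq> v \<and> strictly_antipodal Q u v \<and>
      (\<lambda>x. x - u) ` supporting_cone Q u = (\<lambda>x. v - x) ` supporting_cone Q v"
  proof
    fix p assume "p \<in> ?A"
    then obtain u v where uv: "p = {u, v}" "u \<noteq> v" "strictly_antipodal Q u v"
      unfolding antipodal_pairs_def by blast
    moreover have "strictly_antipodal Q v u"
      using strictly_antipodal_sym polytope_imp_convex assms(1) uv(2,3) by blast
    ultimately have "tangent_cone Q u = uminus ` tangent_cone Q v"
      using unique_partners_imp_tangent_cones_opposite[OF assms(1) uv(3,2)]
        unique[OF uv(3,2)] unique[of v u] by blast
    then show "\<exists>u v. p = {u, v} \<and> u \<noteq> v \<and> strictly_antipodal Q u v \<and>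
        (\<lambda>x. x - u) ` supporting_cone Q u = (\<lambda>x. v - x) ` supporting_cone Q v"
      using uv by (simp only: supporting_cones_opposite_iff) blast
  qed
  have "\<forall>p\<in>?A. \<forall>q\<in>?A. p \<noteq> q \<longrightarrow> p \<inter> q = {}"
    using pairwiseD[OF disjoint] unfolding disjnt_def by blast
  then show ?thesis
    unfolding locally_point_symmetric_def by (intro exI[of _ ?A] conjI blocks cover assms(2))
qed

theorem lemma6:
  fixes Q :: "'a::euclidean_space set"
  assumes "polytope Q" and "aff_dim Q = int DIM('a)"
  shows "locally_point_symmetric Q \<longleftrightarrow> 2 * card (antipodal_pairs Q) = card (vertices Q)"
  using locally_point_symmetric_imp_card[OF assms(1)] card_imp_locally_point_symmetric[OF assms(1)]
  by blast

end
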